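(* Let $\mathbf G$ be a torsion-free locally cyclic group such that $\mathcal O_{\mathbf G}(x)\cong\mathcal I_{\mathbf G}(x)$ (as graphs) for all $x\in G$. Then $\mathbf G\cong(\mathbb Q,+)$.
   Context: For a group $\mathbf G$, the directed $Z^\pm$-power graph $\vec{\mathcal G}^\pm(\mathbf G)$ has vertex set $G$ and an arc $x\to y$ for distinct $x,y$ iff $y=x^n$ for some $n\in\mathbb Z\setminus\{0\}$; its underlying simple graph is the $Z^\pm$-power graph $\mathcal G^\pm(\mathbf G)$ (distinct $x,y$ adjacent iff $y=x^n$ or $x=y^n$ for some nonzero integer $n$). For $x\in G$ let $I_{\mathbf G}(x)=\{y\in G\setminus\{x^{-1}\}\mid y\to x\}$ and $O_{\mathbf G}(x)=\{y\in G\setminus\{x^{-1}\}\mid x\to y\}$ (arcs in $\vec{\mathcal G}^\pm(\mathbf G)$), and let $\mathcal I_{\mathbf G}(x)$, $\mathcal O_{\mathbf G}(x)$ be the subgraphs of $\mathcal G^\pm(\mathbf G)$ induced by $I_{\mathbf G}(x)$, $O_{\mathbf G}(x)$ respectively. *)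

theory Defs
  imports "HOL-Algebra.Algebra"
begin

definition rat_add_group :: "rat monoid" where
  "rat_add_group = \<lparr>carrier = UNIV, monoid.mult = (+), one = 0\<rparr>"

definition pm_arc :: "('a, 'b) monoid_scheme \<Rightarrow> 'a \<Rightarrow> 'a \<Rightarrow> bool" where
  "pm_arc G x y \<longleftrightarrow> x \<in> carrier G \<and> y \<in> carrier G \<and> x \<noteq> y \<and>
     (\<exists>n::int. n \<noteq> 0 \<and> y = x [^]\<^bsub>G\<^esub> n)"

definition pm_adj :: "('a, 'b) monoid_scheme \<Rightarrow> 'a \<Rightarrow> 'a \<Rightarrow> bool" where
  "pm_adj G x y \<longleftrightarrow> pm_arc G x y \<or> pm_arc G y x"

definition pm_in :: "('a, 'b) monoid_scheme \<Rightarrow> 'a \<Rightarrow> 'a set" where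
  "pm_in G x = {y \<in> carrier G - {inv\<^bsub>G\<^esub> x}. pm_arc G y x}"

definition pm_out :: "('a, 'b) monoid_scheme \<Rightarrow> 'a \<Rightarrow> 'a set" where
  "pm_out G x = {y \<in> carrier G - {inv\<^bsub>G\<^esub> x}. pm_arc G x y}"

definition induced_iso :: "('a \<Rightarrow> 'a \<Rightarrow> bool) \<Rightarrow> 'a set \<Rightarrow> 'a set \<Rightarrow> bool" where
  "induced_iso E A B \<longleftrightarrow>
     (\<exists>f. bij_betw f A B \<and> (\<forall>u\<in>A. \<forall>v\<in>A. E u v \<longleftrightarrow> E (f u) (f v)))"

definition torsion_free :: "('a, 'b) monoid_scheme \<Rightarrow> bool" where
  "torsion_free G \<longleftrightarrow>
     (\<forall>x\<in>carrier G. \<forall>n::nat. n > 0 \<and> x [^]\<^bsub>G\<^esub> n = \<one>\<^bsub>G\<^esub> \<longrightarrow> x = \<one>\<^bsub>G\<^esub>)"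

definition locally_cyclic :: "('a, 'b) monoid_scheme \<Rightarrow> bool" where
  "locally_cyclic G \<longleftrightarrow>
     (\<forall>A. A \<subseteq> carrier G \<and> finite A \<longrightarrow>
        (\<exists>g\<in>carrier G. generate G A = generate G {g}))"

end

theory Submission
  imports Defs "HOL-Computational_Algebra.Primes"
begin

text \<open>
  For x \<noteq> 1 in a torsion-free group, n \<mapsto> x^n identifies the out-graph of x with the
  divisibility graph on the integers n with \<bar>n\<bar> \<ge> 2, and taking roots identifies the in-graph
  of x with the divisibility graph on the set D of degrees n for which x has an n-th root;
  local cyclicity makes D closed under divisors and lcm. The full divisibility graph has two
  isomorphism invariants: every vertex is adjacent to a vertex whose closed neighbourhood
  strictly contains that of another vertex, and infinitely many such vertices (the primes) are pairwise
  non-adjacent. If z had no p-th root, then D for x = z^p would contain p but not p^2, and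
  the shape of dominating vertices in D shows that D loses the first invariant if it contains
  infinitely many primes and the second otherwise. So G is divisible, and r \<mapsto> g^r is an
  isomorphism from the rationals onto G for any g \<noteq> 1.
\<close>

text \<open>HOL-Algebra's prime element of a monoid would otherwise shadow the number-theoretic prime.\<close>
hide_const (open) Divisibility.prime

section \<open>Dominating vertices and graph isomorphisms\<close>

definition closed_nbhd :: "('a \<Rightarrow> 'a \<Rightarrow> bool) \<Rightarrow> 'a set \<Rightarrow> 'a \<Rightarrow> 'a set" where
  "closed_nbhd E V v = {u \<in> V. u = v \<or> E u v}"

definition nbhd_psubset :: "('a \<Rightarrow> 'a \<Rightarrow> bool) \<Rightarrow> 'a set \<Rightarrow> 'a \<Rightarrow> 'a \<Rightarrow> bool" where
  "nbhd_psubset E V w v \<longleftrightarrow> w \<in> V \<and> v \<in> V \<and> closed_nbhd E V w \<subset> closed_nbhd E V v"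

definition dominating :: "('a \<Rightarrow> 'a \<Rightarrow> bool) \<Rightarrow> 'a set \<Rightarrow> 'a \<Rightarrow> bool" where
  "dominating E V v \<longleftrightarrow> (\<exists>w. nbhd_psubset E V w v)"

definition adjacent_to_dominating :: "('a \<Rightarrow> 'a \<Rightarrow> bool) \<Rightarrow> 'a set \<Rightarrow> bool" where
  "adjacent_to_dominating E V \<longleftrightarrow> (\<forall>u\<in>V. \<exists>v\<in>V. E u v \<and> dominating E V v)"

definition infinite_independent_dominating :: "('a \<Rightarrow> 'a \<Rightarrow> bool) \<Rightarrow> 'a set \<Rightarrow> bool" where
  "infinite_independent_dominating E V \<longleftrightarrow>
     (\<exists>S\<subseteq>V. infinite S \<and> (\<forall>a\<in>S. \<forall>b\<in>S. \<not> E a b) \<and> (\<forall>v\<in>S. dominating E V v))"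

definition graph_iso :: "('a \<Rightarrow> 'a \<Rightarrow> bool) \<Rightarrow> 'a set \<Rightarrow> ('b \<Rightarrow> 'b \<Rightarrow> bool) \<Rightarrow> 'b set \<Rightarrow> bool" where
  "graph_iso E A E' B \<longleftrightarrow> (\<exists>f. bij_betw f A B \<and> (\<forall>u\<in>A. \<forall>v\<in>A. E u v \<longleftrightarrow> E' (f u) (f v)))"

lemma induced_iso_iff_graph_iso: "induced_iso E A B \<longleftrightarrow> graph_iso E A E B"
  unfolding induced_iso_def graph_iso_def ..

lemma graph_iso_sym:
  assumes "graph_iso E A E' B"
  shows "graph_iso E' B E A"
proof -
  obtain f where f: "bij_betw f A B" and E: "\<forall>u\<in>A. \<forall>v\<in>A. E u v \<longleftrightarrow> E' (f u) (f v)"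
    using assms unfolding graph_iso_def by blast
  let ?g = "inv_into A f"
  have "bij_betw ?g B A" using f by (rule bij_betw_inv_into)
  moreover have "\<forall>u\<in>B. \<forall>v\<in>B. E' u v \<longleftrightarrow> E (?g u) (?g v)"
    using E f by (simp add: bij_betw_def bij_betw_inv_into_right inv_into_into)
  ultimately show ?thesis unfolding graph_iso_def by blast
qed

lemma graph_iso_trans:
  assumes "graph_iso E A E' B" and "graph_iso E' B E'' C"
  shows "graph_iso E A E'' C"
proof -
  obtain f where f: "bij_betw f A B" "\<forall>u\<in>A. \<forall>v\<in>A. E u v \<longleftrightarrow> E' (f u) (f v)"
    using assms(1) unfolding graph_iso_def by blast
  obtain g where g: "bij_betw g B C" "\<forall>u\<in>B. \<forall>v\<in>B. E' u v \<longleftrightarrow> E'' (g u) (g v)"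
    using assms(2) unfolding graph_iso_def by blast
  have "bij_betw (g \<circ> f) A C" using f(1) g(1) by (rule bij_betw_trans)
  moreover have "\<forall>u\<in>A. \<forall>v\<in>A. E u v \<longleftrightarrow> E'' ((g \<circ> f) u) ((g \<circ> f) v)"
    using f g by (auto simp: bij_betw_def)
  ultimately show ?thesis unfolding graph_iso_def by blast
qed

lemma dominating_image:
  assumes f: "bij_betw f A B" and E: "\<forall>u\<in>A. \<forall>v\<in>A. E u v \<longleftrightarrow> E' (f u) (f v)"
    and "dominating E A v"
  shows "dominating E' B (f v)"
proof -
  have image: "f ` closed_nbhd E A u = closed_nbhd E' B (f u)" if "u \<in> A" for u
    using f E that by (auto simp: closed_nbhd_def bij_betw_def inj_on_eq_iff)
  obtain w where w: "w \<in> A" "v \<in> A" "closed_nbhd E A w \<subset> closed_nbhd E A v"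
    using assms(3) unfolding dominating_def nbhd_psubset_def by blast
  have "f ` closed_nbhd E A w \<subset> f ` closed_nbhd E A v"
    using w(3) f inj_on_image_eq_iff[of f A] by (auto simp: bij_betw_def closed_nbhd_def)
  then have "nbhd_psubset E' B (f w) (f v)"
    using w f image by (auto simp: nbhd_psubset_def bij_betw_def)
  then show ?thesis unfolding dominating_def by blast
qed

lemma adjacent_to_dominating_graph_iso:
  assumes "graph_iso E A E' B" and "adjacent_to_dominating E A"
  shows "adjacent_to_dominating E' B"
  unfolding adjacent_to_dominating_def
proof
  obtain f where f: "bij_betw f A B" and E: "\<forall>u\<in>A. \<forall>v\<in>A. E u v \<longleftrightarrow> E' (f u) (f v)"
    using assms(1) unfolding graph_iso_def by blast
  fix y assume "y \<in> B"
  then obtain u where u: "u \<in> A" "y = f u" using f by (auto simp: bij_betw_def)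
  then obtain v where "v \<in> A" "E u v" "dominating E A v"
    using assms(2) unfolding adjacent_to_dominating_def by blast
  then show "\<exists>v\<in>B. E' y v \<and> dominating E' B v"
    using u E dominating_image[OF f E] f by (auto simp: bij_betw_def)
qed

lemma infinite_independent_dominating_graph_iso:
  assumes "graph_iso E A E' B" and "infinite_independent_dominating E A"
  shows "infinite_independent_dominating E' B"
proof -
  obtain f where f: "bij_betw f A B" and E: "\<forall>u\<in>A. \<forall>v\<in>A. E u v \<longleftrightarrow> E' (f u) (f v)"
    using assms(1) unfolding graph_iso_def by blast
  obtain S where S: "S \<subseteq> A" "infinite S" "\<forall>a\<in>S. \<forall>b\<in>S. \<not> E a b" "\<forall>v\<in>S. dominating E A v"
    using assms(2) unfolding infinite_independent_dominating_def by blast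
  have "infinite (f ` S)"
    using S(1,2) f by (meson bij_betw_def finite_imageD inj_on_subset)
  moreover have "f ` S \<subseteq> B" using S(1) f by (auto simp: bij_betw_def)
  moreover have "\<forall>a\<in>f ` S. \<forall>b\<in>f ` S. \<not> E' a b" using S(1,3) E by blast
  moreover have "\<forall>v\<in>f ` S. dominating E' B v" using S(4) dominating_image[OF f E] by blast
  ultimately show ?thesis unfolding infinite_independent_dominating_def by blast
qed

lemma nbhd_psubset_adj:
  assumes "nbhd_psubset E V w v" and "t \<in> V" and "t = w \<or> E t w"
  shows "t = v \<or> E t v"
  using assms by (auto simp: nbhd_psubset_def closed_nbhd_def)

section \<open>Divisibility graphs on integers\<close>

definition dvd_adj :: "int \<Rightarrow> int \<Rightarrow> bool" where
  "dvd_adj a b \<longleftrightarrow> a \<noteq> b \<and> (a dvd b \<or> b dvd a)"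

definition ints_abs_ge2 :: "int set" where
  "ints_abs_ge2 = {n. 2 \<le> \<bar>n\<bar>}"

definition dvd_lcm_closed :: "int set \<Rightarrow> bool" where
  "dvd_lcm_closed D \<longleftrightarrow> D \<subseteq> ints_abs_ge2 \<and>
     (\<forall>n\<in>D. \<forall>d. d dvd n \<and> 2 \<le> \<bar>d\<bar> \<longrightarrow> d \<in> D) \<and> (\<forall>a\<in>D. \<forall>b\<in>D. lcm a b \<in> D)"

lemma dvd_lcm_closedD:
  assumes "dvd_lcm_closed D"
  shows dvd_lcm_closed_abs_ge2: "n \<in> D \<Longrightarrow> 2 \<le> \<bar>n\<bar>"
    and dvd_lcm_closed_dvd: "n \<in> D \<Longrightarrow> d dvd n \<Longrightarrow> 2 \<le> \<bar>d\<bar> \<Longrightarrow> d \<in> D"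
    and dvd_lcm_closed_lcm: "a \<in> D \<Longrightarrow> b \<in> D \<Longrightarrow> lcm a b \<in> D"
  using assms unfolding dvd_lcm_closed_def ints_abs_ge2_def by blast+

lemma dvd_lcm_closed_nonzero: "dvd_lcm_closed D \<Longrightarrow> n \<in> D \<Longrightarrow> n \<noteq> 0"
  using dvd_lcm_closed_abs_ge2 by fastforce

lemma dvd_lcm_closed_prime:
  "dvd_lcm_closed D \<Longrightarrow> n \<in> D \<Longrightarrow> prime p \<Longrightarrow> p dvd n \<Longrightarrow> p \<in> D"
  using dvd_lcm_closed_dvd prime_ge_2_int by force

lemma abs_mult_ge2: "2 \<le> \<bar>a::int\<bar> \<Longrightarrow> b \<noteq> 0 \<Longrightarrow> 2 \<le> \<bar>a * b\<bar>"
proof -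
  assume "2 \<le> \<bar>a\<bar>" "b \<noteq> 0"
  then have "\<bar>a\<bar> * 1 \<le> \<bar>a\<bar> * \<bar>b\<bar>" by (intro mult_left_mono) auto
  with \<open>2 \<le> \<bar>a\<bar>\<close> show ?thesis by (simp add: abs_mult)
qed

lemma dvd_lcm_closed_ints_abs_ge2: "dvd_lcm_closed ints_abs_ge2"
proof -
  have "2 \<le> \<bar>lcm a b\<bar>" if "2 \<le> \<bar>a\<bar>" "2 \<le> \<bar>b\<bar>" for a b :: int
  proof -
    have "lcm a b \<noteq> 0" using that by (auto simp: lcm_eq_0_iff)
    then have "\<bar>a\<bar> \<le> \<bar>lcm a b\<bar>" using dvd_imp_le_int by blast
    with that show ?thesis by linarith
  qed
  then show ?thesis unfolding dvd_lcm_closed_def ints_abs_ge2_def by auto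
qed

lemma closed_nbhd_dvd_adj_uminus: "v \<noteq> 0 \<Longrightarrow> closed_nbhd dvd_adj V (- v) = closed_nbhd dvd_adj V v"
  unfolding closed_nbhd_def dvd_adj_def by auto

lemma nbhd_psubset_dvd_adj_cases:
  assumes "0 \<notin> V" and d: "nbhd_psubset dvd_adj V w v"
  obtains "w dvd v" "\<not> v dvd w" | "v dvd w" "\<not> w dvd v"
proof -
  have V: "w \<in> V" "v \<in> V" and psub: "closed_nbhd dvd_adj V w \<subset> closed_nbhd dvd_adj V v"
    using d by (auto simp: nbhd_psubset_def)
  have "w \<noteq> v" using psub by auto
  moreover have "w = v \<or> dvd_adj w v" using nbhd_psubset_adj[OF d V(1)] by blast
  ultimately have comparable: "w dvd v \<or> v dvd w" by (auto simp: dvd_adj_def)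
  have "\<not> (w dvd v \<and> v dvd w)"
  proof
    assume "w dvd v \<and> v dvd w"
    with \<open>w \<noteq> v\<close> have "w = - v" using zdvd_antisym_abs by (auto simp: abs_if split: if_splits)
    then show False
      using psub closed_nbhd_dvd_adj_uminus[of v V] V assms(1) by fastforce
  qed
  with comparable that show ?thesis by blast
qed

lemma prime_dvd_of_dvd_prime_square:
  fixes q t :: int
  assumes "prime q" and "t dvd q * q" and "2 \<le> \<bar>t\<bar>"
  shows "q dvd t"
proof -
  obtain r where r: "prime r" "r dvd t" using prime_factor_int[of t] assms(3) by auto
  then have "r dvd q" using assms(1,2) dvd_trans prime_dvd_mult_iff by metis
  then show ?thesis using r assms(1) primes_dvd_imp_eq by blast
qed

lemma nbhd_psubset_prime_square:
  fixes q v :: int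
  assumes q: "prime q" and v: "\<bar>v\<bar> = q"
  shows "nbhd_psubset dvd_adj ints_abs_ge2 (q * q) v"
proof -
  have q2: "2 \<le> q" using prime_ge_2_int q by blast
  have "2 * 2 \<le> q * q" using q2 by (intro mult_mono) auto
  then have V: "v \<in> ints_abs_ge2" "q * q \<in> ints_abs_ge2" using v q2 by (auto simp: ints_abs_ge2_def)
  have sub: "closed_nbhd dvd_adj ints_abs_ge2 (q * q) \<subseteq> closed_nbhd dvd_adj ints_abs_ge2 v"
  proof
    fix t assume t: "t \<in> closed_nbhd dvd_adj ints_abs_ge2 (q * q)"
    then have "2 \<le> \<bar>t\<bar>" "t dvd q * q \<or> q * q dvd t"
      by (auto simp: closed_nbhd_def dvd_adj_def ints_abs_ge2_def)
    then have "q dvd t" using prime_dvd_of_dvd_prime_square[OF q] dvd_mult_left by blast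
    then have "v dvd t" using v by (metis abs_dvd_iff)
    then show "t \<in> closed_nbhd dvd_adj ints_abs_ge2 v" using t by (auto simp: closed_nbhd_def dvd_adj_def)
  qed
  txt \<open>The multiple q (q + 1) of v is not comparable with q * q.\<close>
  define t where "t = q * (q + 1)"
  have "q * 1 < q * (q + 1)" "2 * 3 \<le> q * (q + 1)" using q2 by (intro mult_strict_left_mono mult_mono; simp)+
  then have t: "t \<in> ints_abs_ge2" "t \<noteq> v" "v dvd t"
    using v q2 by (auto simp: t_def ints_abs_ge2_def abs_if split: if_splits)
  have "\<not> q * q dvd t" using q2 zdvd_imp_le[of q 1] by (auto simp: t_def dvd_add_right_iff)
  moreover have "\<not> t dvd q * q" using q2 zdvd_imp_le[of "q + 1" q] by (auto simp: t_def)
  ultimately have "t \<notin> closed_nbhd dvd_adj ints_abs_ge2 (q * q)"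
    by (auto simp: closed_nbhd_def dvd_adj_def)
  moreover have "t \<in> closed_nbhd dvd_adj ints_abs_ge2 v" using t by (auto simp: closed_nbhd_def dvd_adj_def)
  ultimately show ?thesis using sub V by (auto simp: nbhd_psubset_def)
qed

lemma dominating_prime:
  fixes v :: int
  assumes "prime \<bar>v\<bar>"
  shows "dominating dvd_adj ints_abs_ge2 v"
  using nbhd_psubset_prime_square[OF assms refl] unfolding dominating_def by blast

lemma adjacent_to_dominating_ints_abs_ge2: "adjacent_to_dominating dvd_adj ints_abs_ge2"
  unfolding adjacent_to_dominating_def
proof
  fix u assume "u \<in> ints_abs_ge2"
  then obtain q where q: "prime q" "q dvd u" using prime_factor_int[of u] by (auto simp: ints_abs_ge2_def)
  have "2 \<le> q" using prime_ge_2_int q(1) by blast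
  define v where "v = (if u = q then - q else q)"
  have "dvd_adj u v" "v \<in> ints_abs_ge2" "prime \<bar>v\<bar>"
    using q \<open>2 \<le> q\<close> by (auto simp: v_def dvd_adj_def ints_abs_ge2_def)
  then show "\<exists>v\<in>ints_abs_ge2. dvd_adj u v \<and> dominating dvd_adj ints_abs_ge2 v"
    using dominating_prime by blast
qed

lemma infinite_int_primes: "infinite {p::int. prime p}"
proof -
  have "infinite (int ` {p::nat. prime p})"
    using primes_infinite by (simp add: finite_image_iff)
  moreover have "int ` {p::nat. prime p} \<subseteq> {p::int. prime p}" by auto
  ultimately show ?thesis using finite_subset by blast
qed

lemma infinite_independent_dominating_ints_abs_ge2:
  "infinite_independent_dominating dvd_adj ints_abs_ge2"
  unfolding infinite_independent_dominating_def
proof (intro exI conjI)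
  show "{p. prime p} \<subseteq> ints_abs_ge2" using prime_ge_2_int by (auto simp: ints_abs_ge2_def)
  show "\<forall>a\<in>{p. prime p}. \<forall>b\<in>{p. prime p}. \<not> dvd_adj a b"
    using primes_dvd_imp_eq by (auto simp: dvd_adj_def)
  show "\<forall>v\<in>{p. prime p}. dominating dvd_adj ints_abs_ge2 v"
    using dominating_prime prime_ge_2_int by auto
qed (rule infinite_int_primes)

lemma nbhd_psubset_dvd_adj_contr:
  assumes "nbhd_psubset dvd_adj D w v" "t \<in> D" "t = w \<or> t dvd w \<or> w dvd t"
    and "t \<noteq> v" "\<not> t dvd v" "\<not> v dvd t"
  shows False
  using nbhd_psubset_adj[OF assms(1,2)] assms(3-) by (auto simp: dvd_adj_def)

lemma not_dvd_lcm_prime_power: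
  fixes v w r s :: int
  assumes "w \<noteq> 0" "prime r" "prime s" "s \<noteq> r" "multiplicity r w < multiplicity r v"
  shows "\<not> v dvd lcm w (s ^ k)"
proof
  assume "v dvd lcm w (s ^ k)"
  moreover have "lcm w (s ^ k) dvd w * s ^ k" by (simp add: lcm_least)
  ultimately have "r ^ multiplicity r v dvd w * s ^ k"
    using multiplicity_dvd[of r v] by (blast intro: dvd_trans)
  moreover have "coprime (r ^ multiplicity r v) (s ^ k)"
    using primes_coprime[OF assms(2,3)] assms(4) by simp
  ultimately have "r ^ multiplicity r v dvd w" using coprime_dvd_mult_left_iff by blast
  then show False
    using power_dvd_iff_le_multiplicity[OF assms(1), of r] prime_ge_2_int[OF assms(2)] assms(5) by auto
qed

lemma nbhd_psubset_proper_divisor: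
  assumes D: "dvd_lcm_closed D" and d: "nbhd_psubset dvd_adj D w v"
    and wv: "w dvd v" "\<not> v dvd w"
  shows "\<exists>r\<in>D. prime r \<and> (\<forall>s. prime s \<and> s \<noteq> r \<longrightarrow> v * s \<notin> D)"
proof -
  have wD: "w \<in> D" and vD: "v \<in> D" using d by (auto simp: nbhd_psubset_def)
  have w0: "w \<noteq> 0" and v0: "v \<noteq> 0" using dvd_lcm_closed_nonzero[OF D] wD vD by auto
  obtain r where r: "prime r" "multiplicity r w < multiplicity r v"
    using multiplicity_le_imp_dvd[OF v0] wv(2) not_le by blast
  then have "r dvd v" using not_dvd_imp_multiplicity_0[of r v] by auto
  have "v * s \<notin> D" if s: "prime s" "s \<noteq> r" for s
  proof
    assume vsD: "v * s \<in> D"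
    txt \<open>e is a divisor of v s above w that is not comparable with v.\<close>
    define m where "m = multiplicity s v"
    define e where "e = lcm w (s ^ (m + 1))"
    have "s ^ m * s dvd v * s" by (simp add: m_def multiplicity_dvd mult_dvd_mono)
    then have "e dvd v * s" using wv(1) by (simp add: e_def dvd_mult2)
    moreover have we: "w dvd e" by (simp add: e_def)
    moreover have "e \<noteq> 0" using w0 s(1) by (auto simp: e_def lcm_eq_0_iff)
    then have "\<bar>w\<bar> \<le> \<bar>e\<bar>" using we dvd_imp_le_int by blast
    then have "2 \<le> \<bar>e\<bar>" using dvd_lcm_closed_abs_ge2[OF D wD] by linarith
    ultimately have eD: "e \<in> D" using dvd_lcm_closed_dvd[OF D vsD] by blast
    have "\<not> s ^ (m + 1) dvd v"
      using power_dvd_iff_le_multiplicity[OF v0, of s "m + 1"] s(1) by (auto simp: m_def)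
    moreover have "s ^ (m + 1) dvd e" by (simp add: e_def)
    ultimately have "e \<noteq> v" "\<not> e dvd v" using dvd_trans by blast+
    moreover have "\<not> v dvd e"
      unfolding e_def by (rule not_dvd_lcm_prime_power[OF w0 r(1) s(1) s(2) r(2)])
    ultimately show False using nbhd_psubset_dvd_adj_contr[OF d eD] we by blast
  qed
  moreover have "r \<in> D" using dvd_lcm_closed_prime[OF D vD r(1) \<open>r dvd v\<close>] .
  ultimately show ?thesis using r(1) by blast
qed

lemma nbhd_psubset_proper_multiple:
  assumes D: "dvd_lcm_closed D" and d: "nbhd_psubset dvd_adj D w v"
    and vw: "v dvd w" "\<not> w dvd v"
  shows "\<exists>q\<in>D. prime q \<and> prime_factors v \<subseteq> {q}"
proof -
  have wD: "w \<in> D" and vD: "v \<in> D" using d by (auto simp: nbhd_psubset_def)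
  have w0: "w \<noteq> 0" and v0: "v \<noteq> 0" using dvd_lcm_closed_nonzero[OF D] wD vD by auto
  obtain q where q: "prime q" "multiplicity q v < multiplicity q w"
    using multiplicity_le_imp_dvd[OF w0] vw(2) not_le by blast
  then have "q dvd w" using not_dvd_imp_multiplicity_0[of q w] by auto
  have "r = q" if r: "prime r" "r dvd v" for r
  proof (rule ccontr)
    assume "r \<noteq> q"
    txt \<open>The full power of q in w is a divisor of w not comparable with v.\<close>
    define e where "e = q ^ multiplicity q w"
    have "q \<le> e" using q prime_ge_2_int[OF q(1)] by (auto simp: e_def intro: self_le_power)
    then have eD: "e \<in> D"
      using dvd_lcm_closed_dvd[OF D wD] prime_ge_2_int[OF q(1)] by (simp add: e_def multiplicity_dvd)
    have "\<not> r dvd e"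
      using \<open>r \<noteq> q\<close> prime_dvd_power[OF r(1)] primes_dvd_imp_eq[OF r(1) q(1)] by (auto simp: e_def)
    then have "e \<noteq> w" "e \<noteq> v" "\<not> v dvd e" using r(2) vw(1) dvd_trans by blast+
    moreover have "\<not> e dvd v"
      using power_dvd_iff_le_multiplicity[OF v0, of q] q prime_ge_2_int[OF q(1)] by (auto simp: e_def)
    ultimately show False
      using nbhd_psubset_dvd_adj_contr[OF d eD] by (auto simp: e_def multiplicity_dvd)
  qed
  then have "prime_factors v \<subseteq> {q}" by (auto simp: in_prime_factors_iff)
  moreover have "q \<in> D" using dvd_lcm_closed_prime[OF D wD q(1) \<open>q dvd w\<close>] .
  ultimately show ?thesis using q(1) by blast
qed

lemma nbhd_psubset_proper_multiple_prime_square: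
  assumes D: "dvd_lcm_closed D" and d: "nbhd_psubset dvd_adj D w v"
    and vw: "v dvd w" "\<not> w dvd v" and p: "prime p" "p dvd v"
  shows "p * p \<in> D"
proof (rule ccontr)
  assume pp: "p * p \<notin> D"
  have wD: "w \<in> D" using d by (auto simp: nbhd_psubset_def)
  have w0: "w \<noteq> 0" using dvd_lcm_closed_nonzero[OF D wD] .
  have p2: "2 \<le> p" using prime_ge_2_int p(1) by blast
  obtain k t where k: "v = p * k" and t: "w = v * t" using p(2) vw(1) by blast
  define m where "m = k * t"
  have wm: "w = p * m" using k t by (simp add: m_def)
  have "\<not> p dvd m"
  proof
    assume "p dvd m"
    then have "p * p dvd w" using wm by simp
    moreover have "2 \<le> \<bar>p * p\<bar>" using abs_mult_ge2[of p p] p2 by simp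
    ultimately show False using pp dvd_lcm_closed_dvd[OF D wD] by blast
  qed
  txt \<open>The cofactor m of p in w is a divisor of w not comparable with v.\<close>
  have "\<bar>m\<bar> \<noteq> 1" using vw p(2) wm by (auto simp: abs_if split: if_splits)
  then have mD: "m \<in> D" using dvd_lcm_closed_dvd[OF D wD, of m] w0 wm by fastforce
  have "m \<noteq> v" "\<not> v dvd m" using p(2) \<open>\<not> p dvd m\<close> dvd_trans by blast+
  moreover have "\<not> m dvd v"
  proof
    assume "m dvd v"
    then have "m dvd k * p" using k by (simp add: ac_simps)
    moreover have "coprime m p" using prime_imp_coprime[OF p(1) \<open>\<not> p dvd m\<close>] by (simp add: ac_simps)
    ultimately have "k * t dvd k * 1" using coprime_dvd_mult_left_iff by (auto simp: m_def)
    moreover have "k \<noteq> 0" using k t w0 by auto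
    ultimately have "is_unit t" by simp
    then show False using vw(2) t by auto
  qed
  ultimately show False using nbhd_psubset_dvd_adj_contr[OF d mD] wm by auto
qed

lemma not_adjacent_to_dominating:
  assumes D: "dvd_lcm_closed D" and p: "prime p" "p \<in> D" "p * p \<notin> D"
    and inf: "infinite {s. prime s \<and> s \<in> D}"
  shows "\<not> adjacent_to_dominating dvd_adj D"
proof
  assume "adjacent_to_dominating dvd_adj D"
  then obtain v w where vD: "v \<in> D" and pv: "dvd_adj p v" and d: "nbhd_psubset dvd_adj D w v"
    using p(2) unfolding adjacent_to_dominating_def dominating_def by blast
  have v0: "v \<noteq> 0" using dvd_lcm_closed_nonzero[OF D vD] .
  have "p dvd v"
  proof -
    obtain r where r: "prime r" "r dvd v"
      using prime_factor_int[of v] dvd_lcm_closed_abs_ge2[OF D vD] by auto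
    then show ?thesis using pv p(1) primes_dvd_imp_eq[OF r(1) p(1)] dvd_trans by (auto simp: dvd_adj_def)
  qed
  have "0 \<notin> D" using dvd_lcm_closed_nonzero[OF D] by blast
  then show False
  proof (rule nbhd_psubset_dvd_adj_cases[OF _ d])
    assume "w dvd v" "\<not> v dvd w"
    then obtain r where r: "\<forall>s. prime s \<and> s \<noteq> r \<longrightarrow> v * s \<notin> D"
      using nbhd_psubset_proper_divisor[OF D d] by blast
    have "infinite ({s. prime s \<and> s \<in> D} - insert r (prime_factors v))"
      using inf by (simp add: Diff_infinite_finite)
    then obtain s where s: "prime s" "s \<in> D" "s \<noteq> r" "s \<notin> prime_factors v"
      using infinite_imp_nonempty by blast
    have "\<not> s dvd v" using s(1,4) v0 by (simp add: in_prime_factors_iff)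
    then have lcm: "lcm v s = \<bar>v * s\<bar>"
      using lcm_coprime[of v s] prime_imp_coprime[OF s(1)] by (simp add: coprime_commute)
    have "lcm v s \<in> D" using dvd_lcm_closed_lcm[OF D vD s(2)] .
    moreover have "2 \<le> \<bar>v * s\<bar>" using dvd_lcm_closed_abs_ge2[OF D \<open>lcm v s \<in> D\<close>] lcm by simp
    ultimately have "v * s \<in> D" using dvd_lcm_closed_dvd[OF D] lcm by simp
    then show False using r s by blast
  next
    assume "v dvd w" "\<not> w dvd v"
    then show False using nbhd_psubset_proper_multiple_prime_square[OF D d _ _ p(1) \<open>p dvd v\<close>] p(3) by blast
  qed
qed

lemma dominating_dvd_adj_shape:
  assumes D: "dvd_lcm_closed D" and "dominating dvd_adj D v"
  shows "\<exists>q\<in>D. prime q \<and> (prime_factors v \<subseteq> {q} \<or> (\<forall>s. prime s \<and> s \<noteq> q \<longrightarrow> v * s \<notin> D))"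
proof -
  obtain w where d: "nbhd_psubset dvd_adj D w v" using assms(2) unfolding dominating_def by blast
  have "0 \<notin> D" using dvd_lcm_closed_nonzero[OF D] by blast
  then show ?thesis
    by (rule nbhd_psubset_dvd_adj_cases[OF _ d])
      (use nbhd_psubset_proper_divisor[OF D d] nbhd_psubset_proper_multiple[OF D d] in blast)+
qed

lemma dvd_or_dvd_if_multiplicity_eq_except:
  fixes a b q :: int
  assumes "a \<noteq> 0" "b \<noteq> 0" and "\<And>t. prime t \<Longrightarrow> t \<noteq> q \<Longrightarrow> multiplicity t a = multiplicity t b"
  shows "a dvd b \<or> b dvd a"
proof (cases "multiplicity q a \<le> multiplicity q b")
  case True
  have "a dvd b"
    by (rule multiplicity_le_imp_dvd[OF assms(1)]) (use True assms(3) in \<open>metis order.refl\<close>)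
  then show ?thesis ..
next
  case False
  have "b dvd a"
    by (rule multiplicity_le_imp_dvd[OF assms(2)]) (use False assms(3) in \<open>metis order.refl nat_le_linear\<close>)
  then show ?thesis ..
qed

lemma dvd_or_dvd_if_prime_factors_subset:
  fixes a b q :: int
  assumes "a \<noteq> 0" "b \<noteq> 0" "prime_factors a \<subseteq> {q}" "prime_factors b \<subseteq> {q}"
  shows "a dvd b \<or> b dvd a"
proof (rule dvd_or_dvd_if_multiplicity_eq_except[OF assms(1,2)])
  fix t :: int assume "prime t" "t \<noteq> q"
  then have "\<not> t dvd a" "\<not> t dvd b" using assms by (auto simp: in_prime_factors_iff)
  then show "multiplicity t a = multiplicity t b" by (simp add: not_dvd_imp_multiplicity_0)
qed

lemma dvd_lcm_closed_multiplicity_le: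
  assumes D: "dvd_lcm_closed D" and "a \<in> D" "b \<in> D" "prime s" "a * s \<notin> D"
  shows "multiplicity s b \<le> multiplicity s a"
proof (rule ccontr)
  assume less: "\<not> multiplicity s b \<le> multiplicity s a"
  have a0: "a \<noteq> 0" and b0: "b \<noteq> 0" using dvd_lcm_closed_nonzero[OF D] assms(2,3) by auto
  have s0: "s \<noteq> 0" using assms(4) by auto
  txt \<open>Otherwise a s divides lcm a b \<in> D.\<close>
  have "a * s dvd lcm a b"
  proof (rule multiplicity_le_imp_dvd)
    fix t :: int assume t: "prime t"
    have "multiplicity t (a * s) = multiplicity t a + multiplicity t s"
      using prime_elem_multiplicity_mult_distrib[OF prime_imp_prime_elem[OF t] a0 s0] .
    moreover have "multiplicity t a \<le> multiplicity t (lcm a b)"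
      "multiplicity t b \<le> multiplicity t (lcm a b)"
      using a0 b0 by (simp_all add: dvd_imp_multiplicity_le lcm_eq_0_iff)
    moreover have "multiplicity t s = (if t = s then 1 else 0)"
      using t assms(4) prime_multiplicity_other[OF t assms(4)] multiplicity_prime[OF prime_imp_prime_elem] by auto
    ultimately show "multiplicity t (a * s) \<le> multiplicity t (lcm a b)" using less by auto
  qed (use a0 s0 in simp)
  moreover have "2 \<le> \<bar>a * s\<bar>" using abs_mult_ge2[OF dvd_lcm_closed_abs_ge2[OF D assms(2)] s0] .
  ultimately have "a * s \<in> D" using dvd_lcm_closed_dvd[OF D dvd_lcm_closed_lcm[OF D assms(2,3)]] by blast
  then show False using assms(5) by blast
qed

lemma dvd_or_dvd_if_no_prime_extension:
  assumes D: "dvd_lcm_closed D" and "a \<in> D" "b \<in> D"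
    and "\<forall>s. prime s \<and> s \<noteq> q \<longrightarrow> a * s \<notin> D" "\<forall>s. prime s \<and> s \<noteq> q \<longrightarrow> b * s \<notin> D"
  shows "a dvd b \<or> b dvd a"
proof (rule dvd_or_dvd_if_multiplicity_eq_except)
  show "a \<noteq> 0" "b \<noteq> 0" using dvd_lcm_closed_nonzero[OF D] assms(2,3) by auto
  fix t assume "prime t" "t \<noteq> q"
  then show "multiplicity t a = multiplicity t b"
    using dvd_lcm_closed_multiplicity_le[OF D] assms by (meson le_antisym)
qed

lemma finite_if_pairwise_eq: "\<forall>a\<in>A. \<forall>b\<in>A. a = b \<Longrightarrow> finite A"
  by (metis finite.simps is_singletonI' is_singleton_the_elem)

lemma not_infinite_independent_dominating:
  assumes D: "dvd_lcm_closed D" and fin: "finite {s. prime s \<and> s \<in> D}"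
  shows "\<not> infinite_independent_dominating dvd_adj D"
proof
  assume "infinite_independent_dominating dvd_adj D"
  then obtain S where S: "S \<subseteq> D" "infinite S" and indep: "\<forall>a\<in>S. \<forall>b\<in>S. \<not> dvd_adj a b"
    and dom: "\<forall>v\<in>S. dominating dvd_adj D v"
    unfolding infinite_independent_dominating_def by blast
  have eq: "a = b" if "a \<in> S" "b \<in> S" "a dvd b \<or> b dvd a" for a b
    using indep that by (auto simp: dvd_adj_def)
  txt \<open>Each vertex of S is one of at most two vertices attached to a prime of D.\<close>
  define T where "T q = {v \<in> S. prime_factors v \<subseteq> {q}}" for q
  define F where "F q = {v \<in> S. \<forall>s. prime s \<and> s \<noteq> q \<longrightarrow> v * s \<notin> D}" for q
  have "S \<subseteq> (\<Union>q\<in>{s. prime s \<and> s \<in> D}. T q \<union> F q)"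
  proof
    fix v assume "v \<in> S"
    then obtain q where "q \<in> D" "prime q"
      "prime_factors v \<subseteq> {q} \<or> (\<forall>s. prime s \<and> s \<noteq> q \<longrightarrow> v * s \<notin> D)"
      using dominating_dvd_adj_shape[OF D] dom by blast
    then show "v \<in> (\<Union>q\<in>{s. prime s \<and> s \<in> D}. T q \<union> F q)"
      using \<open>v \<in> S\<close> unfolding T_def F_def by blast
  qed
  moreover have "finite (T q)" for q
  proof (rule finite_if_pairwise_eq, intro ballI)
    fix a b assume "a \<in> T q" "b \<in> T q"
    then show "a = b"
      using eq dvd_or_dvd_if_prime_factors_subset dvd_lcm_closed_nonzero[OF D] S(1)
      unfolding T_def by blast
  qed
  moreover have "finite (F q)" for q
  proof (rule finite_if_pairwise_eq, intro ballI)
    fix a b assume "a \<in> F q" "b \<in> F q"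
    then show "a = b"
      using eq dvd_or_dvd_if_no_prime_extension[OF D] S(1) unfolding F_def by blast
  qed
  ultimately have "finite S" using fin by (simp add: finite_subset)
  then show False using S(2) by blast
qed

lemma dvd_lcm_closed_prime_square:
  assumes D: "dvd_lcm_closed D" and iso: "graph_iso dvd_adj ints_abs_ge2 dvd_adj D"
    and p: "prime p" "p \<in> D"
  shows "p * p \<in> D"
proof (rule ccontr)
  assume "p * p \<notin> D"
  show False
  proof (cases "finite {s. prime s \<and> s \<in> D}")
    case True
    then show False
      using not_infinite_independent_dominating[OF D] infinite_independent_dominating_ints_abs_ge2
        infinite_independent_dominating_graph_iso[OF iso] by blast
  next
    case False
    then show False
      using not_adjacent_to_dominating[OF D p \<open>p * p \<notin> D\<close>] adjacent_to_dominating_ints_abs_ge2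
        adjacent_to_dominating_graph_iso[OF iso] by blast
  qed
qed

section \<open>Torsion-free locally cyclic groups\<close>

context group
begin

lemma locally_cyclic_int_pow_common:
  assumes "locally_cyclic G" "x \<in> carrier G" "y \<in> carrier G"
  obtains c and i j :: int where "c \<in> carrier G" "x = c [^] i" "y = c [^] j"
proof -
  have "{x, y} \<subseteq> carrier G" "finite {x, y}" using assms(2,3) by auto
  then obtain c where c: "c \<in> carrier G" "generate G {x, y} = generate G {c}"
    using assms(1) unfolding locally_cyclic_def by blast
  then have "x \<in> generate G {c}" "y \<in> generate G {c}" using generate.incl[of _ "{x, y}" G] by auto
  then show ?thesis using that generate_pow[OF c(1)] c(1) by auto
qed

lemma locally_cyclic_imp_comm_group:
  assumes "locally_cyclic G"
  shows "comm_group G"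
proof (rule group_comm_groupI)
  fix x y assume "x \<in> carrier G" "y \<in> carrier G"
  then obtain c and i j :: int where c: "c \<in> carrier G" "x = c [^] i" "y = c [^] j"
    using locally_cyclic_int_pow_common[OF assms] by blast
  have "x \<otimes> y = c [^] (i + j)" using c by (simp add: int_pow_mult)
  also have "\<dots> = c [^] (j + i)" by (simp only: add.commute)
  also have "\<dots> = y \<otimes> x" using c by (simp add: int_pow_mult)
  finally show "x \<otimes> y = y \<otimes> x" .
qed

lemma torsion_free_int_pow_eq_one:
  assumes tf: "torsion_free G" and x: "x \<in> carrier G" and "n \<noteq> 0" and "x [^] (n::int) = \<one>"
  shows "x = \<one>"
proof -
  have "x [^] \<bar>n\<bar> = \<one>" using assms(4) int_pow_neg[OF x, of n] by (cases "0 \<le> n") auto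
  then have "x [^] nat \<bar>n\<bar> = \<one>" using int_pow_int[of G x "nat \<bar>n\<bar>"] by simp
  moreover have "0 < nat \<bar>n\<bar>" using \<open>n \<noteq> 0\<close> by simp
  ultimately show ?thesis using tf x unfolding torsion_free_def by blast
qed

lemma torsion_free_int_pow_inj:
  assumes tf: "torsion_free G" and x: "x \<in> carrier G" "x \<noteq> \<one>" and "x [^] (m::int) = x [^] n"
  shows "m = n"
  using torsion_free_int_pow_eq_one[OF tf x(1), of "m - n"] assms(4) x by (auto simp: int_pow_diff)

lemma int_pow_eq_inv_iff:
  fixes n :: int
  assumes tf: "torsion_free G" and x: "x \<in> carrier G" "x \<noteq> \<one>"
  shows "x [^] n = inv x \<longleftrightarrow> n = -1"
  using torsion_free_int_pow_inj[OF tf x, of n "-1"] int_pow_neg[OF x(1), of 1] x(1) by auto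

lemma int_pow_eq_self_iff:
  fixes n :: int
  assumes tf: "torsion_free G" and x: "x \<in> carrier G" "x \<noteq> \<one>"
  shows "x [^] n = x \<longleftrightarrow> n = 1"
  using torsion_free_int_pow_inj[OF tf x, of n 1] x(1) by auto

end

context comm_group
begin

lemma torsion_free_int_pow_cancel:
  assumes tf: "torsion_free G" and "u \<in> carrier G" "w \<in> carrier G" "n \<noteq> 0" and "u [^] (n::int) = w [^] n"
  shows "u = w"
proof -
  have "(u \<otimes> inv w) [^] n = u [^] n \<otimes> inv (w [^] n)"
    using assms(2,3) by (simp add: int_pow_distrib int_pow_inv)
  also have "\<dots> = \<one>" using assms(3,5) by simp
  finally have "u \<otimes> inv w = \<one>" using torsion_free_int_pow_eq_one[OF tf _ assms(4)] assms(2,3) by simp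
  then have "inv (inv w) = u" using inv_equality[of u "inv w"] assms(2,3) by blast
  then show ?thesis using assms(3) by simp
qed

definition int_root :: "'a \<Rightarrow> int \<Rightarrow> 'a" where
  "int_root x n = (THE y. y \<in> carrier G \<and> y [^] n = x)"

lemma int_root_eq:
  assumes tf: "torsion_free G" and "y \<in> carrier G" "n \<noteq> 0" "y [^] n = x"
  shows "int_root x n = y"
  unfolding int_root_def
  using assms torsion_free_int_pow_cancel[OF tf] by (intro the_equality) auto

definition root_degrees :: "'a \<Rightarrow> int set" where
  "root_degrees x = {n \<in> ints_abs_ge2. \<exists>y\<in>carrier G. y [^] n = x}"

lemma dvd_lcm_closed_root_degrees:
  assumes tf: "torsion_free G" and lc: "locally_cyclic G" and x: "x \<in> carrier G" "x \<noteq> \<one>"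
  shows "dvd_lcm_closed (root_degrees x)"
  unfolding dvd_lcm_closed_def
proof (intro conjI ballI allI impI)
  show "root_degrees x \<subseteq> ints_abs_ge2" by (auto simp: root_degrees_def)
next
  fix n d assume "n \<in> root_degrees x" and d: "d dvd n \<and> 2 \<le> \<bar>d\<bar>"
  then obtain y where y: "y \<in> carrier G" "y [^] n = x" by (auto simp: root_degrees_def)
  obtain e where e: "n = d * e" using d by blast
  have "(y [^] e) [^] d = x" using y e by (simp add: int_pow_pow mult.commute)
  then show "d \<in> root_degrees x" using d y(1) by (auto simp: root_degrees_def ints_abs_ge2_def)
next
  fix a b assume "a \<in> root_degrees x" "b \<in> root_degrees x"
  then obtain y u where ab: "a \<in> ints_abs_ge2" "b \<in> ints_abs_ge2"
    and y: "y \<in> carrier G" "y [^] a = x" and u: "u \<in> carrier G" "u [^] b = x"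
    by (auto simp: root_degrees_def)
  txt \<open>Write both roots as powers of one element c; then a and b divide the exponent of x in c.\<close>
  obtain c and i j :: int where c: "c \<in> carrier G" "y = c [^] i" "u = c [^] j"
    using locally_cyclic_int_pow_common[OF lc y(1) u(1)] .
  have xa: "c [^] (i * a) = x" and xb: "c [^] (j * b) = x" using y u c by (simp_all add: int_pow_pow)
  then have "c \<noteq> \<one>" using x(2) by auto
  then have "i * a = j * b" using torsion_free_int_pow_inj[OF tf c(1)] xa xb by simp
  then have "lcm a b dvd i * a" by (metis dvd_triv_right lcm_least)
  then obtain e where e: "i * a = lcm a b * e" by blast
  have "(c [^] e) [^] lcm a b = x" using c(1) xa e by (simp add: int_pow_pow mult.commute)
  moreover have "lcm a b \<in> ints_abs_ge2" using dvd_lcm_closed_lcm[OF dvd_lcm_closed_ints_abs_ge2 ab] .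
  ultimately show "lcm a b \<in> root_degrees x" using c(1) by (auto simp: root_degrees_def)
qed

lemma pm_arc_int_pow:
  fixes m n :: int
  assumes tf: "torsion_free G" and x: "x \<in> carrier G" "x \<noteq> \<one>" and "n \<noteq> 0"
  shows "pm_arc G (x [^] m) (x [^] n) \<longleftrightarrow> m \<noteq> n \<and> m dvd n"
proof -
  have "(\<exists>k::int. k \<noteq> 0 \<and> x [^] n = (x [^] m) [^] k) \<longleftrightarrow> m dvd n"
  proof
    assume "\<exists>k::int. k \<noteq> 0 \<and> x [^] n = (x [^] m) [^] k"
    then obtain k :: int where "x [^] n = (x [^] m) [^] k" by blast
    then have "x [^] n = x [^] (m * k)" using x(1) by (simp add: int_pow_pow)
    then have "n = m * k" using torsion_free_int_pow_inj[OF tf x] by blast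
    then show "m dvd n" by simp
  next
    assume "m dvd n"
    then obtain k where k: "n = m * k" by blast
    then have "k \<noteq> 0" using \<open>n \<noteq> 0\<close> by auto
    moreover have "x [^] n = (x [^] m) [^] k" using k x(1) by (simp add: int_pow_pow)
    ultimately show "\<exists>k::int. k \<noteq> 0 \<and> x [^] n = (x [^] m) [^] k" by blast
  qed
  moreover have "x [^] m \<noteq> x [^] n \<longleftrightarrow> m \<noteq> n" using torsion_free_int_pow_inj[OF tf x] by auto
  moreover have "x [^] m \<in> carrier G" "x [^] n \<in> carrier G" using x(1) by simp_all
  ultimately show ?thesis unfolding pm_arc_def by (simp only: simp_thms)
qed

lemma pm_out_eq:
  assumes tf: "torsion_free G" and x: "x \<in> carrier G" "x \<noteq> \<one>"
  shows "pm_out G x = (\<lambda>n. x [^] n) ` ints_abs_ge2"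
proof -
  have "n \<in> ints_abs_ge2 \<longleftrightarrow> n \<noteq> 0 \<and> x [^] n \<noteq> inv x \<and> x \<noteq> x [^] n" for n :: int
    using int_pow_eq_inv_iff[OF tf x, of n] int_pow_eq_self_iff[OF tf x, of n]
    by (auto simp: ints_abs_ge2_def)
  moreover have "y \<in> pm_out G x \<longleftrightarrow> (\<exists>n::int. n \<noteq> 0 \<and> x [^] n \<noteq> inv x \<and> x \<noteq> x [^] n \<and> y = x [^] n)" for y
    unfolding pm_out_def pm_arc_def using x(1) by auto
  ultimately show ?thesis by blast
qed

lemma graph_iso_pm_out:
  assumes tf: "torsion_free G" and x: "x \<in> carrier G" "x \<noteq> \<one>"
  shows "graph_iso dvd_adj ints_abs_ge2 (pm_adj G) (pm_out G x)"
  unfolding graph_iso_def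
proof (intro exI conjI)
  show "bij_betw (\<lambda>n. x [^] n) ints_abs_ge2 (pm_out G x)"
    using torsion_free_int_pow_inj[OF tf x] pm_out_eq[OF tf x] by (auto simp: bij_betw_def inj_on_def)
  show "\<forall>m\<in>ints_abs_ge2. \<forall>n\<in>ints_abs_ge2. dvd_adj m n \<longleftrightarrow> pm_adj G (x [^] m) (x [^] n)"
  proof (intro ballI)
    fix m n assume "m \<in> ints_abs_ge2" "n \<in> ints_abs_ge2"
    then have "m \<noteq> 0" "n \<noteq> 0" by (auto simp: ints_abs_ge2_def)
    then show "dvd_adj m n \<longleftrightarrow> pm_adj G (x [^] m) (x [^] n)"
      unfolding pm_adj_def using pm_arc_int_pow[OF tf x] by (auto simp: dvd_adj_def)
  qed
qed

lemma int_root_root_degrees: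
  assumes tf: "torsion_free G" and "n \<in> root_degrees x"
  shows "int_root x n \<in> carrier G" "int_root x n [^] n = x"
proof -
  obtain y where "y \<in> carrier G" "y [^] n = x" "n \<noteq> 0"
    using assms(2) by (auto simp: root_degrees_def ints_abs_ge2_def)
  then show "int_root x n \<in> carrier G" "int_root x n [^] n = x" using int_root_eq[OF tf] by auto
qed

lemma pm_in_eq:
  assumes tf: "torsion_free G" and x: "x \<in> carrier G" "x \<noteq> \<one>"
  shows "pm_in G x = int_root x ` root_degrees x"
proof (intro equalityI subsetI)
  fix y assume "y \<in> pm_in G x"
  then have y: "y \<in> carrier G" "y \<noteq> inv x" "y \<noteq> x" and "pm_arc G y x"
    unfolding pm_in_def pm_arc_def by auto
  then obtain n :: int where n: "n \<noteq> 0" "x = y [^] n" unfolding pm_arc_def by blast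
  have "n \<noteq> 1"
  proof
    assume "n = 1"
    then have "x = y" using n(2) y(1) by simp
    then show False using y(3) by simp
  qed
  moreover have "n \<noteq> -1"
  proof
    assume "n = -1"
    then have "x = inv y" using n(2) int_pow_neg[OF y(1), of 1] y(1) by simp
    then show False using y(1,2) by simp
  qed
  ultimately have "n \<in> root_degrees x" using n y(1) by (auto simp: root_degrees_def ints_abs_ge2_def)
  moreover have "int_root x n = y" using int_root_eq[OF tf y(1) n(1)] n(2) by simp
  ultimately show "y \<in> int_root x ` root_degrees x" by blast
next
  fix y assume "y \<in> int_root x ` root_degrees x"
  then obtain n where nD: "n \<in> root_degrees x" and yn: "y = int_root x n" by blast
  have n: "n \<noteq> 0" "n \<noteq> 1" "n \<noteq> -1" using nD by (auto simp: root_degrees_def ints_abs_ge2_def)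
  have y: "y \<in> carrier G" "y [^] n = x" using int_root_root_degrees[OF tf nD] yn by auto
  have "y \<noteq> x"
  proof
    assume "y = x"
    then show False using y(2) n int_pow_eq_self_iff[OF tf x] by simp
  qed
  moreover have "y \<noteq> inv x"
  proof
    assume "y = inv x"
    then have "x [^] (-n) = x" using y x(1) by (simp add: int_pow_inv int_pow_neg)
    then show False using n int_pow_eq_self_iff[OF tf x] by simp
  qed
  ultimately show "y \<in> pm_in G x" using y n x(1) unfolding pm_in_def pm_arc_def by blast
qed

lemma pm_arc_int_root:
  assumes tf: "torsion_free G" and x: "x \<in> carrier G" "x \<noteq> \<one>"
    and a: "a \<in> root_degrees x" and b: "b \<in> root_degrees x"
  shows "pm_arc G (int_root x a) (int_root x b) \<longleftrightarrow> a \<noteq> b \<and> b dvd a"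
proof -
  define u where "u = int_root x a"
  define v where "v = int_root x b"
  have u: "u \<in> carrier G" "u [^] a = x" using int_root_root_degrees[OF tf a] by (simp_all add: u_def)
  have v: "v \<in> carrier G" "v [^] b = x" using int_root_root_degrees[OF tf b] by (simp_all add: v_def)
  have "u \<noteq> \<one>" using u x(2) by auto
  have "a \<noteq> 0" "b \<noteq> 0" using a b by (auto simp: root_degrees_def ints_abs_ge2_def)
  have "u \<noteq> v \<longleftrightarrow> a \<noteq> b"
    using torsion_free_int_pow_inj[OF tf u(1) \<open>u \<noteq> \<one>\<close>, of a b] u v by (auto simp: u_def v_def)
  moreover have "(\<exists>k::int. k \<noteq> 0 \<and> v = u [^] k) \<longleftrightarrow> b dvd a"
  proof
    assume "\<exists>k::int. k \<noteq> 0 \<and> v = u [^] k"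
    then obtain k :: int where "v = u [^] k" by blast
    then have "u [^] (k * b) = u [^] a" using u v by (simp add: int_pow_pow)
    then have "k * b = a" using torsion_free_int_pow_inj[OF tf u(1) \<open>u \<noteq> \<one>\<close>] by blast
    then show "b dvd a" by (metis dvd_triv_right)
  next
    assume "b dvd a"
    then obtain k where k: "a = b * k" by blast
    then have "k \<noteq> 0" using \<open>a \<noteq> 0\<close> by auto
    moreover have "(u [^] k) [^] b = v [^] b" using u v k by (simp add: int_pow_pow mult.commute)
    then have "u [^] k = v" using torsion_free_int_pow_cancel[OF tf _ v(1) \<open>b \<noteq> 0\<close>] u(1) by simp
    ultimately show "\<exists>k::int. k \<noteq> 0 \<and> v = u [^] k" by blast
  qed
  ultimately show ?thesis unfolding pm_arc_def u_def[symmetric] v_def[symmetric]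
    using u(1) v(1) by (simp only: simp_thms)
qed

lemma graph_iso_pm_in:
  assumes tf: "torsion_free G" and x: "x \<in> carrier G" "x \<noteq> \<one>"
  shows "graph_iso dvd_adj (root_degrees x) (pm_adj G) (pm_in G x)"
  unfolding graph_iso_def
proof (intro exI conjI)
  have "inj_on (int_root x) (root_degrees x)"
  proof (rule inj_onI)
    fix a b assume a: "a \<in> root_degrees x" and b: "b \<in> root_degrees x" and "int_root x a = int_root x b"
    then have "int_root x a [^] a = int_root x a [^] b" using int_root_root_degrees[OF tf] by metis
    moreover have "int_root x a \<noteq> \<one>" using int_root_root_degrees[OF tf a] x(2) by auto
    ultimately show "a = b" using torsion_free_int_pow_inj[OF tf int_root_root_degrees(1)[OF tf a]] by blast
  qed
  then show "bij_betw (int_root x) (root_degrees x) (pm_in G x)"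
    using pm_in_eq[OF tf x] by (simp add: bij_betw_def)
  show "\<forall>a\<in>root_degrees x. \<forall>b\<in>root_degrees x. dvd_adj a b \<longleftrightarrow> pm_adj G (int_root x a) (int_root x b)"
    using pm_arc_int_root[OF tf x] unfolding pm_adj_def dvd_adj_def by auto
qed

lemma graph_iso_ints_abs_ge2_root_degrees:
  assumes tf: "torsion_free G" and x: "x \<in> carrier G" "x \<noteq> \<one>"
    and "induced_iso (pm_adj G) (pm_out G x) (pm_in G x)"
  shows "graph_iso dvd_adj ints_abs_ge2 dvd_adj (root_degrees x)"
proof -
  have "graph_iso dvd_adj ints_abs_ge2 (pm_adj G) (pm_in G x)"
    using graph_iso_trans[OF graph_iso_pm_out[OF tf x]] assms(4)
    unfolding induced_iso_iff_graph_iso by blast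
  then show ?thesis using graph_iso_trans graph_iso_sym[OF graph_iso_pm_in[OF tf x]] by blast
qed

lemma prime_root_exists:
  fixes p :: int
  assumes tf: "torsion_free G" and lc: "locally_cyclic G"
    and iso: "\<forall>x\<in>carrier G. induced_iso (pm_adj G) (pm_out G x) (pm_in G x)"
    and p: "prime p" and z: "z \<in> carrier G"
  shows "\<exists>y\<in>carrier G. y [^] p = z"
proof (cases "z = \<one>")
  case True
  then show ?thesis by (intro bexI[of _ \<one>]) auto
next
  case False
  have p0: "p \<noteq> 0" using p by auto
  txt \<open>A p-th root of z is obtained from a (p * p)-th root of x = z^p.\<close>
  define x where "x = z [^] p"
  have x: "x \<in> carrier G" "x \<noteq> \<one>"
    using z False torsion_free_int_pow_eq_one[OF tf z p0] by (auto simp: x_def)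
  have D: "dvd_lcm_closed (root_degrees x)" using dvd_lcm_closed_root_degrees[OF tf lc x] .
  have "p \<in> root_degrees x"
    using z prime_ge_2_int[OF p] by (auto simp: x_def root_degrees_def ints_abs_ge2_def)
  then have "p * p \<in> root_degrees x"
    using dvd_lcm_closed_prime_square[OF D graph_iso_ints_abs_ge2_root_degrees[OF tf x] p] iso x(1)
    by blast
  then obtain y where y: "y \<in> carrier G" "(y [^] p) [^] p = z [^] p"
    by (auto simp: root_degrees_def x_def int_pow_pow)
  then have "y [^] p = z" using torsion_free_int_pow_cancel[OF tf _ z p0] by simp
  then show ?thesis using y(1) by blast
qed

lemma int_root_exists:
  assumes roots: "\<And>p z. prime (p::int) \<Longrightarrow> z \<in> carrier G \<Longrightarrow> \<exists>y\<in>carrier G. y [^] p = z"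
    and "n \<noteq> 0"
  shows "\<forall>z\<in>carrier G. \<exists>y\<in>carrier G. y [^] (n::int) = z"
  using \<open>n \<noteq> 0\<close>
proof (induction n rule: prime_divisors_induct)
  case zero
  then show ?case by simp
next
  case (unit n)
  then have "n = 1 \<or> n = -1" by auto
  then show ?case
  proof
    assume "n = 1"
    then show ?thesis by auto
  next
    assume "n = -1"
    then show ?thesis by (metis inv_closed inv_inv int_pow_neg int_pow_1)
  qed
next
  case (factor p n)
  show ?case
  proof
    fix z assume "z \<in> carrier G"
    then obtain w where w: "w \<in> carrier G" "w [^] n = z" using factor by auto
    then obtain y where "y \<in> carrier G" "y [^] p = w" using roots factor.hyps by blast
    then show "\<exists>y\<in>carrier G. y [^] (p * n) = z" using w by (auto simp: int_pow_pow)
  qed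
qed

end

section \<open>Divisible torsion-free locally cyclic groups\<close>

lemma group_rat_add_group: "group rat_add_group"
  unfolding rat_add_group_def by (rule groupI) (auto intro: exI[of _ "- x" for x])

locale divisible_locally_cyclic_group = comm_group +
  fixes g
  assumes torsion_free: "torsion_free G" and locally_cyclic: "locally_cyclic G"
    and g: "g \<in> carrier G" "g \<noteq> \<one>"
    and divisible: "\<And>n z. n \<noteq> 0 \<Longrightarrow> z \<in> carrier G \<Longrightarrow> \<exists>y\<in>carrier G. y [^] (n::int) = z"
begin

lemma int_root_g: "b \<noteq> 0 \<Longrightarrow> int_root g b \<in> carrier G \<and> int_root g b [^] b = g"
  using divisible[of b g] g(1) int_root_eq[OF torsion_free] by auto

lemma int_root_g_ne_one: "b \<noteq> 0 \<Longrightarrow> int_root g b \<noteq> \<one>"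
  using int_root_g g(2) by force

lemma int_root_g_mult_pow:
  assumes "b \<noteq> 0" "c \<noteq> 0"
  shows "int_root g (b * c) [^] (a * c) = int_root g b [^] a"
proof -
  have r: "int_root g (b * c) \<in> carrier G" "int_root g (b * c) [^] (b * c) = g"
    using int_root_g assms by auto
  then have "(int_root g (b * c) [^] c) [^] b = g" by (simp add: int_pow_pow mult.commute)
  then have "int_root g b = int_root g (b * c) [^] c"
    using int_root_eq[OF torsion_free] r(1) assms(1) by simp
  then show ?thesis using r(1) by (simp add: int_pow_pow mult.commute)
qed

definition rat_power :: "rat \<Rightarrow> 'a" where
  "rat_power r = (case quotient_of r of (a, b) \<Rightarrow> int_root g b [^] a)"

lemma rat_power_Fract:
  assumes "0 < b"
  shows "rat_power (Fract a b) = int_root g b [^] a"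
proof -
  obtain n d where nd: "quotient_of (Fract a b) = (n, d)" by fastforce
  have "0 < d" using quotient_of_denom_pos[OF nd] .
  have "Fract a b = Fract n d" using quotient_of_div[OF nd] by (simp add: Fract_of_int_quotient)
  then have ad: "a * d = n * b" using \<open>0 < b\<close> \<open>0 < d\<close> by (simp add: eq_rat)
  have "rat_power (Fract a b) = int_root g (d * b) [^] (n * b)"
    using int_root_g_mult_pow \<open>0 < b\<close> \<open>0 < d\<close> by (simp add: rat_power_def nd)
  also have "\<dots> = int_root g (b * d) [^] (a * d)" by (simp add: ad mult.commute)
  also have "\<dots> = int_root g b [^] a" using int_root_g_mult_pow \<open>0 < b\<close> \<open>0 < d\<close> by simp
  finally show ?thesis .
qed

lemma rat_power_add: "rat_power (r + s) = rat_power r \<otimes> rat_power s"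
proof -
  obtain a b c d where r: "r = Fract a b" "0 < b" and s: "s = Fract c d" "0 < d"
    by (metis Rat_cases)
  have "rat_power (r + s) = int_root g (b * d) [^] (a * d + c * b)"
    using r s by (simp add: rat_power_Fract)
  also have "\<dots> = int_root g (b * d) [^] (a * d) \<otimes> int_root g (b * d) [^] (c * b)"
    using int_root_g r(2) s(2) by (simp add: int_pow_mult)
  also have "\<dots> = rat_power r \<otimes> rat_power s"
    using int_root_g_mult_pow[of b d a] int_root_g_mult_pow[of d b c] r s
    by (simp add: rat_power_Fract mult.commute)
  finally show ?thesis .
qed

lemma inj_rat_power: "inj rat_power"
proof (rule injI)
  fix r s assume eq: "rat_power r = rat_power s"
  obtain a b c d where r: "r = Fract a b" "0 < b" and s: "s = Fract c d" "0 < d"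
    by (metis Rat_cases)
  have "int_root g (b * d) [^] (a * d) = int_root g (b * d) [^] (c * b)"
    using eq int_root_g_mult_pow[of b d a] int_root_g_mult_pow[of d b c] r s
    by (simp add: rat_power_Fract mult.commute)
  moreover have bd: "b * d \<noteq> 0" using r(2) s(2) by simp
  ultimately have "a * d = c * b"
    using torsion_free_int_pow_inj[OF torsion_free _ int_root_g_ne_one[OF bd]] int_root_g[OF bd] by blast
  then show "r = s" using r s by (simp add: eq_rat)
qed

lemma range_rat_power: "range rat_power = carrier G"
proof (intro equalityI subsetI)
  fix h assume "h \<in> range rat_power"
  then obtain a b where "h = rat_power (Fract a b)" "0 < b" by (metis Rat_cases rangeE)
  then show "h \<in> carrier G" using int_root_g by (simp add: rat_power_Fract)
next
  fix h assume h: "h \<in> carrier G"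
  txt \<open>With g = c^i and h = c^j for some c and i > 0, the root of order i of g is c, so h = g^(j/i).\<close>
  obtain c and i j :: int where c: "c \<in> carrier G" "g = c [^] i" "h = c [^] j" "0 < i"
  proof -
    obtain c and i j :: int where c: "c \<in> carrier G" "g = c [^] i" "h = c [^] j"
      using locally_cyclic_int_pow_common[OF locally_cyclic g(1) h] .
    show ?thesis
    proof (cases "0 < i")
      case True
      with c show ?thesis by (rule that)
    next
      case False
      moreover have "i \<noteq> 0" using c g(2) by auto
      moreover have "inv c \<in> carrier G" "g = inv c [^] (- i)" "h = inv c [^] (- j)"
        using c by (simp_all add: int_pow_inv int_pow_neg)
      ultimately show ?thesis using that by simp
    qed
  qed
  then have "int_root g i = c" using int_root_eq[OF torsion_free] by simp
  then have "rat_power (Fract j i) = h" using rat_power_Fract[OF c(4), of j] c(3) by simp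
  then show "h \<in> range rat_power" by blast
qed

theorem iso_rat_add_group: "G \<cong> rat_add_group"
proof -
  have "rat_power \<in> iso rat_add_group G"
    using rat_power_add inj_rat_power range_rat_power
    by (auto simp: iso_def hom_def rat_add_group_def bij_betw_def)
  then show ?thesis using group.iso_sym[OF group_rat_add_group] is_isoI by blast
qed

end

theorem mainTheorem7:
  fixes G :: "('a, 'b) monoid_scheme"
  assumes "group G"
    and "carrier G \<noteq> {\<one>\<^bsub>G\<^esub>}"
    and "torsion_free G"
    and "locally_cyclic G"
    and "\<forall>x\<in>carrier G. induced_iso (pm_adj G) (pm_out G x) (pm_in G x)"
  shows "G \<cong> rat_add_group"
proof -
  interpret group G by fact
  interpret comm_group G using locally_cyclic_imp_comm_group[OF assms(4)] .
  obtain g where g: "g \<in> carrier G" "g \<noteq> \<one>\<^bsub>G\<^esub>" using assms(2) one_closed by blast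
  have "\<exists>y\<in>carrier G. y [^]\<^bsub>G\<^esub> n = z" if "n \<noteq> 0" "z \<in> carrier G" for n :: int and z
    using int_root_exists[OF prime_root_exists[OF assms(3-5)] that(1)] that(2) by blast
  then interpret divisible_locally_cyclic_group G g
    using assms(3,4) g by unfold_locales auto
  show ?thesis by (rule iso_rat_add_group)
qed

end
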